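(* Let $\mathcal R$ be a left-linear TRS. (1) If $t \leftarrow^{p}_{\mathcal R} s \to^{\epsilon}_{\mathcal B^\pm} u$ is a critical peak (from an overlap of a rule of $\mathcal R$ at position $p$ into a pair of $\mathcal B^\pm$), then there is a term $v$ with $t\,\nabla_s\, v$ and $v\,\tilde\nabla_s\, u$. (2) If $t \leftarrow^{p}_{\mathcal B^\pm} s \to^{\epsilon}_{\mathcal R} u$ is a critical peak (from an overlap of a pair of $\mathcal B^\pm$ at position $p$ into a rule of $\mathcal R$), then there is a term $v$ with $v\,\tilde\nabla_s\, t$ and $v\,\nabla_s\, u$.
   Context: Terms are built from a signature $\mathcal F$ and variables $\mathcal V$. A rule $\ell\to r$ is a pair of terms with $\ell\notin\mathcal V$ and $\mathrm{Var}(r)\subseteq\mathrm{Var}(\ell)$; a TRS is a set of rules, an ES a set of equations. For a set $\mathcal E$ of pairs of terms, $s\to_{\mathcal E}t$ iff $s|_p=\ell\sigma$ and $t=s[r\sigma]_p$ for some $(\ell,r)\in\mathcal E$, position $p$ and substitution $\sigma$ (written $\to^p_{\mathcal E}$ to make $p$ explicit); $\leftarrow_{\mathcal E}$ is its inverse and $\leftrightarrow_{\mathcal E}$ its symmetric closure. $\mathcal B$ is a fixed ES with $\mathrm{Var}(\ell)=\mathrm{Var}(r)$ for all $\ell\approx r\in\mathcal B$; $\sim_{\mathcal B}=\leftrightarrow^*_{\mathcal B}$ and $\mathcal B^\pm=\mathcal B\cup\{t\approx s\mid s\approx t\in\mathcal B\}$. For a TRS $\mathcal R$: $\downarrow_{\mathcal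 R}=\to^*_{\mathcal R}\cdot\leftarrow^*_{\mathcal R}$ and $s\downarrow^\sim_{\mathcal R}t$ iff $s\to^*_{\mathcal R}\cdot\sim_{\mathcal B}\cdot\leftarrow^*_{\mathcal R}t$. Critical pairs: for sets of oriented pairs $\mathcal R_1,\mathcal R_2$ (equations of $\mathcal B^\pm$ read as oriented pairs), an overlap is $\langle\ell_1\to r_1,p,\ell_2\to r_2\rangle$ with $\ell_i\to r_i$ variants of elements of $\mathcal R_i$ without common variables, $p$ a non-variable position of $\ell_2$, $\ell_1$ and $\ell_2|_p$ unifiable, and the two rules not variants of each other if $p=\epsilon$. With an mgu $\sigma$ this yields the critical peak $\ell_2\sigma[r_1\sigma]_p\leftarrow^p\ell_2\sigma\to^\epsilon r_2\sigma$ and critical pair $\ell_2\sigma[r_1\sigma]_p\approx r_2\sigma$. A critical peak $t\leftarrow^p s\to^\epsilon u$ is prime if all proper subterms of $s|_p$ are normal forms of $\to_{\mathcal R}$ (irreducibility is always checked w.r.t. $\mathcal R$, also for overlaps involving $\mathcal B^\pm$). $\mathrm{PCP}(\mathcal R)$ is the set of prime critical pairs from overlaps of $\mathcal R$ with itself; $\mathrm{PCP}^\pm(\mathcal R,\mathcal B^\pm)$ is the set of prime critical pairs from overlaps $\langle\rho_1,p,\rho_2\rangle$ with $\rho_1\in\mathcal R,\rho_2\in\mathcal B^\pm$ or $\rho_1\in\mathcal B^\pm,\rho_2\in\mathcal R$. Triangle notation: $t\,\nabla_s\,u$ iff $s\to^+_{\mathcal R}t$, $s\to^+_{\mathcal R}u$,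 and ($t\downarrow_{\mathcal R}u$ or $t\leftrightarrow_{\mathrm{PCP}(\mathcal R)}u$). $t\,\tilde\nabla_s\,u$ iff $s\to^+_{\mathcal R}t$, $s\sim_{\mathcal B}u$, and ($t\downarrow^\sim_{\mathcal R}u$ or $t\leftrightarrow_{\mathrm{PCP}^\pm(\mathcal R,\mathcal B^\pm)}u$). *)

theory Defs
  imports Main "HOL-Library.Infinite_Typeclass"
begin

datatype ('f, 'v) trm = Var 'v | Fun 'f "('f, 'v) trm list"

type_synonym pos = "nat list"
type_synonym ('f, 'v) subst = "'v \<Rightarrow> ('f, 'v) trm"

fun vars_list :: "('f, 'v) trm \<Rightarrow> 'v list" where
  "vars_list (Var x) = [x]"
| "vars_list (Fun f ts) = concat (map vars_list ts)"

definition vars :: "('f, 'v) trm \<Rightarrow> 'v set" where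
  "vars t = set (vars_list t)"

definition linear :: "('f, 'v) trm \<Rightarrow> bool" where
  "linear t = distinct (vars_list t)"

fun subst_apply :: "('f, 'v) trm \<Rightarrow> ('f, 'v) subst \<Rightarrow> ('f, 'v) trm" (infixl "\<cdot>" 67) where
  "Var x \<cdot> \<sigma> = \<sigma> x"
| "Fun f ts \<cdot> \<sigma> = Fun f (map (\<lambda>t. t \<cdot> \<sigma>) ts)"

fun is_pos :: "('f, 'v) trm \<Rightarrow> pos \<Rightarrow> bool" where
  "is_pos t [] = True"
| "is_pos (Var x) (i # p) = False"
| "is_pos (Fun f ts) (i # p) = (i < length ts \<and> is_pos (ts ! i) p)"

(* Subterm at a position (meaningful only for positions of the term). *)
fun subt_at :: "('f, 'v) trm \<Rightarrow> pos \<Rightarrow> ('f, 'v) trm" where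
  "subt_at t [] = t"
| "subt_at (Var x) (i # p) = Var x"
| "subt_at (Fun f ts) (i # p) = subt_at (ts ! i) p"

fun replace_at :: "('f, 'v) trm \<Rightarrow> pos \<Rightarrow> ('f, 'v) trm \<Rightarrow> ('f, 'v) trm" where
  "replace_at s [] t = t"
| "replace_at (Var x) (i # p) t = Var x"
| "replace_at (Fun f ts) (i # p) t = Fun f (ts[i := replace_at (ts ! i) p t])"

definition rstep_at :: "('f, 'v) trm rel \<Rightarrow> pos \<Rightarrow> ('f, 'v) trm rel" where
  "rstep_at E p = {(s, t). \<exists>l r \<sigma>. (l, r) \<in> E \<and> is_pos s p \<and>
      subt_at s p = l \<cdot> \<sigma> \<and> t = replace_at s p (r \<cdot> \<sigma>)}"

definition rstep :: "('f, 'v) trm rel \<Rightarrow> ('f, 'v) trm rel" where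
  "rstep E = (\<Union>p. rstep_at E p)"

definition conv_step :: "('f, 'v) trm rel \<Rightarrow> ('f, 'v) trm rel" where
  "conv_step E = rstep E \<union> (rstep E)\<inverse>"

definition trs :: "('f, 'v) trm rel \<Rightarrow> bool" where
  "trs R = (\<forall>(l, r) \<in> R. (\<exists>f ts. l = Fun f ts) \<and> vars r \<subseteq> vars l)"

definition left_linear :: "('f, 'v) trm rel \<Rightarrow> bool" where
  "left_linear R = (\<forall>(l, r) \<in> R. linear l)"

definition Bpm :: "('f, 'v) trm rel \<Rightarrow> ('f, 'v) trm rel" where
  "Bpm B = B \<union> B\<inverse>"

definition simB :: "('f, 'v) trm rel \<Rightarrow> ('f, 'v) trm rel" where
  "simB B = (conv_step B)\<^sup>*"

definition join :: "('f, 'v) trm rel \<Rightarrow> ('f, 'v) trm rel" where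
  "join R = (rstep R)\<^sup>* O ((rstep R)\<^sup>*)\<inverse>"

definition join_sim :: "('f, 'v) trm rel \<Rightarrow> ('f, 'v) trm rel \<Rightarrow> ('f, 'v) trm rel" where
  "join_sim R B = (rstep R)\<^sup>* O simB B O ((rstep R)\<^sup>*)\<inverse>"

definition unifies :: "('f, 'v) subst \<Rightarrow> ('f, 'v) trm \<Rightarrow> ('f, 'v) trm \<Rightarrow> bool" where
  "unifies \<sigma> s t = (s \<cdot> \<sigma> = t \<cdot> \<sigma>)"

definition is_mgu :: "('f, 'v) subst \<Rightarrow> ('f, 'v) trm \<Rightarrow> ('f, 'v) trm \<Rightarrow> bool" where
  "is_mgu \<sigma> s t = (unifies \<sigma> s t \<and>
     (\<forall>\<tau>. unifies \<tau> s t \<longrightarrow> (\<exists>\<gamma>. \<forall>x. \<tau> x = \<sigma> x \<cdot> \<gamma>)))"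

definition variant :: "('f, 'v) trm \<times> ('f, 'v) trm \<Rightarrow> ('f, 'v) trm \<times> ('f, 'v) trm \<Rightarrow> bool" where
  "variant \<rho> \<rho>' = (\<exists>\<pi>. bij \<pi> \<and> fst \<rho>' = fst \<rho> \<cdot> (Var \<circ> \<pi>) \<and> snd \<rho>' = snd \<rho> \<cdot> (Var \<circ> \<pi>))"

definition rule_vars :: "('f, 'v) trm \<times> ('f, 'v) trm \<Rightarrow> 'v set" where
  "rule_vars \<rho> = vars (fst \<rho>) \<union> vars (snd \<rho>)"

definition overlap :: "('f, 'v) trm rel \<Rightarrow> ('f, 'v) trm rel \<Rightarrow>
    ('f, 'v) trm \<times> ('f, 'v) trm \<Rightarrow> pos \<Rightarrow> ('f, 'v) trm \<times> ('f, 'v) trm \<Rightarrow> bool" where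
  "overlap R1 R2 \<rho>1 p \<rho>2 =
    ((\<exists>\<rho> \<in> R1. variant \<rho> \<rho>1) \<and> (\<exists>\<rho> \<in> R2. variant \<rho> \<rho>2) \<and>
     rule_vars \<rho>1 \<inter> rule_vars \<rho>2 = {} \<and>
     is_pos (fst \<rho>2) p \<and> (\<exists>f ts. subt_at (fst \<rho>2) p = Fun f ts) \<and>
     (\<exists>\<sigma>. unifies \<sigma> (fst \<rho>1) (subt_at (fst \<rho>2) p)) \<and>
     (p = [] \<longrightarrow> \<not> variant \<rho>1 \<rho>2))"

(* t \<leftarrow>\<^sup>p s \<rightarrow>\<^sup>\<epsilon> u is a critical peak from an overlap of R1 (at p) into R2. *)
definition crit_peak :: "('f, 'v) trm rel \<Rightarrow> ('f, 'v) trm rel \<Rightarrow>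
    ('f, 'v) trm \<Rightarrow> pos \<Rightarrow> ('f, 'v) trm \<Rightarrow> ('f, 'v) trm \<Rightarrow> bool" where
  "crit_peak R1 R2 t p s u = (\<exists>l1 r1 l2 r2 \<sigma>.
     overlap R1 R2 (l1, r1) p (l2, r2) \<and> is_mgu \<sigma> l1 (subt_at l2 p) \<and>
     s = l2 \<cdot> \<sigma> \<and> t = replace_at (l2 \<cdot> \<sigma>) p (r1 \<cdot> \<sigma>) \<and> u = r2 \<cdot> \<sigma>)"

definition NF :: "('f, 'v) trm rel \<Rightarrow> ('f, 'v) trm \<Rightarrow> bool" where
  "NF R t = (\<nexists>w. (t, w) \<in> rstep R)"

definition prime_peak :: "('f, 'v) trm rel \<Rightarrow> ('f, 'v) trm rel \<Rightarrow> ('f, 'v) trm rel \<Rightarrow>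
    ('f, 'v) trm \<Rightarrow> pos \<Rightarrow> ('f, 'v) trm \<Rightarrow> ('f, 'v) trm \<Rightarrow> bool" where
  "prime_peak R R1 R2 t p s u = (crit_peak R1 R2 t p s u \<and>
     (\<forall>q. q \<noteq> [] \<and> is_pos (subt_at s p) q \<longrightarrow> NF R (subt_at (subt_at s p) q)))"

definition PCP :: "('f, 'v) trm rel \<Rightarrow> ('f, 'v) trm rel" where
  "PCP R = {(t, u). \<exists>p s. prime_peak R R R t p s u}"

definition PCPpm :: "('f, 'v) trm rel \<Rightarrow> ('f, 'v) trm rel \<Rightarrow> ('f, 'v) trm rel" where
  "PCPpm R B = {(t, u). \<exists>p s. prime_peak R R (Bpm B) t p s u \<or> prime_peak R (Bpm B) R t p s u}"

definition nabla :: "('f, 'v) trm rel \<Rightarrow> ('f, 'v) trm \<Rightarrow> ('f, 'v) trm \<Rightarrow> ('f, 'v) trm \<Rightarrow> bool" where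
  "nabla R t s u = ((s, t) \<in> (rstep R)\<^sup>+ \<and> (s, u) \<in> (rstep R)\<^sup>+ \<and>
     ((t, u) \<in> join R \<or> (t, u) \<in> conv_step (PCP R)))"

definition nabla_tilde :: "('f, 'v) trm rel \<Rightarrow> ('f, 'v) trm rel \<Rightarrow>
    ('f, 'v) trm \<Rightarrow> ('f, 'v) trm \<Rightarrow> ('f, 'v) trm \<Rightarrow> bool" where
  "nabla_tilde R B t s u = ((s, t) \<in> (rstep R)\<^sup>+ \<and> (s, u) \<in> simB B \<and>
     ((t, u) \<in> join_sim R B \<or> (t, u) \<in> conv_step (PCPpm R B)))"

end

theory Submission
  imports Defs "HOL-Combinatorics.Transposition"
begin

text \<open>
Let \<open>t \<leftarrow>\<^sup>p s \<rightarrow>\<^sup>\<epsilon> u\<close> be a critical peak. If it is prime, \<open>t\<close> and \<open>u\<close> differ by a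
prime critical pair and \<open>v\<close> is taken to be \<open>t\<close> (resp. \<open>u\<close>). Otherwise \<open>s|\<^sub>p\<close> has an
\<open>\<R>\<close>-redex strictly below its root; choose an innermost one and let \<open>v\<close> be its contractum
in \<open>s\<close>. In both peaks \<open>t \<leftarrow> s \<rightarrow> v\<close> and \<open>v \<leftarrow> s \<rightarrow> u\<close> the redex contracted for \<open>v\<close> is
then an innermost redex nested strictly inside the other one. If it sits at a non-variable
position of the outer left-hand side, the peak is an instance of a prime critical peak;
otherwise it sits inside the substitution, and rewriting every occurrence of that variable
joins the peak by one step of the outer rule.
\<close>

lemma is_pos_append: "is_pos s (p @ q) \<longleftrightarrow> is_pos s p \<and> is_pos (subt_at s p) q"
  by (induction s p rule: is_pos.induct) auto

lemma subt_at_append: "is_pos s p \<Longrightarrow> subt_at s (p @ q) = subt_at (subt_at s p) q"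
  by (induction s p rule: is_pos.induct) auto

lemma replace_at_append:
  "is_pos s p \<Longrightarrow> replace_at s (p @ q) w = replace_at s p (replace_at (subt_at s p) q w)"
  by (induction s p rule: is_pos.induct) auto

lemma subt_at_replace_at: "is_pos s p \<Longrightarrow> subt_at (replace_at s p w) p = w"
  by (induction s p rule: is_pos.induct) auto

lemma is_pos_replace_at: "is_pos s p \<Longrightarrow> is_pos (replace_at s p w) p"
  by (induction s p rule: is_pos.induct) auto

lemma replace_at_replace_at:
  "is_pos s p \<Longrightarrow> replace_at (replace_at s p w) p w' = replace_at s p w'"
  by (induction s p rule: is_pos.induct) auto

lemma replace_at_subt_at: "is_pos s p \<Longrightarrow> replace_at s p (subt_at s p) = s"
  by (induction s p rule: is_pos.induct) auto

lemma is_pos_subst: "is_pos t p \<Longrightarrow> is_pos (t \<cdot> \<sigma>) p"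
  by (induction t p rule: is_pos.induct) auto

lemma subt_at_subst: "is_pos t p \<Longrightarrow> subt_at (t \<cdot> \<sigma>) p = subt_at t p \<cdot> \<sigma>"
  by (induction t p rule: is_pos.induct) auto

lemma replace_at_subst:
  "is_pos t p \<Longrightarrow> replace_at t p w \<cdot> \<sigma> = replace_at (t \<cdot> \<sigma>) p (w \<cdot> \<sigma>)"
  by (induction t p rule: is_pos.induct) (auto simp: map_update)

lemma is_pos_subst_cases:
  assumes "is_pos (t \<cdot> \<sigma>) p"
  obtains f ts where "is_pos t p" "subt_at t p = Fun f ts"
  | q1 q2 x where "p = q1 @ q2" "is_pos t q1" "subt_at t q1 = Var x" "is_pos (\<sigma> x) q2"
  using assms
proof (induction t arbitrary: p)
  case (Var x)
  then show ?case by force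
next
  case (Fun f ts)
  show ?case
  proof (cases p)
    case Nil
    with Fun.prems(1) show ?thesis by simp
  next
    case (Cons i p')
    with Fun.prems(3) have i: "i < length ts" and p': "is_pos (ts ! i \<cdot> \<sigma>) p'" by auto
    show ?thesis
    proof (rule Fun.IH[OF nth_mem[OF i] _ _ p'])
      fix g us
      assume "is_pos (ts ! i) p'" "subt_at (ts ! i) p' = Fun g us"
      then show ?thesis using Fun.prems(1) i Cons by simp
    next
      fix q1 q2 x
      assume "p' = q1 @ q2" "is_pos (ts ! i) q1" "subt_at (ts ! i) q1 = Var x" "is_pos (\<sigma> x) q2"
      then show ?thesis using Fun.prems(2)[of "i # q1" q2 x] i Cons by simp
    qed
  qed
qed

lemma subst_subst: "t \<cdot> \<sigma> \<cdot> \<tau> = t \<cdot> (\<lambda>x. \<sigma> x \<cdot> \<tau>)"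
  by (induction t) auto

lemma subst_Var [simp]: "t \<cdot> Var = t"
  by (induction t) (auto simp: map_idI)

lemma vars_Var [simp]: "vars (Var x) = {x}"
  by (simp add: vars_def)

lemma vars_Fun [simp]: "vars (Fun f ts) = (\<Union>t \<in> set ts. vars t)"
  by (simp add: vars_def)

lemma finite_vars [simp]: "finite (vars t)"
  by (simp add: vars_def)

lemma subst_cong: "(\<And>x. x \<in> vars t \<Longrightarrow> \<sigma> x = \<tau> x) \<Longrightarrow> t \<cdot> \<sigma> = t \<cdot> \<tau>"
  by (induction t) auto

lemma vars_subst: "vars (t \<cdot> \<sigma>) = (\<Union>x \<in> vars t. vars (\<sigma> x))"
  by (induction t) auto

lemma vars_subt_at: "is_pos t p \<Longrightarrow> vars (subt_at t p) \<subseteq> vars t"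
  by (induction t p rule: is_pos.induct) (auto, meson nth_mem subsetD)

lemma size_subst_Var_le: "x \<in> vars t \<Longrightarrow> size (\<sigma> x) \<le> size (t \<cdot> \<sigma>)"
proof (induction t)
  case (Fun f ts)
  then obtain t where "t \<in> set ts" "x \<in> vars t" by auto
  with Fun.IH show ?case
    by (auto intro!: size_list_estimation' intro: le_SucI)
qed simp

lemma size_subt_at_less: "is_pos t p \<Longrightarrow> p \<noteq> [] \<Longrightarrow> size (subt_at t p) < size t"
proof (induction t p rule: is_pos.induct)
  case (3 f ts i p)
  then have "size (subt_at (ts ! i) p) \<le> size (ts ! i)"
    by (cases p) auto
  also have "\<dots> \<le> size_list size ts"
    using 3(2) by (auto intro!: size_list_estimation'[where x = "ts ! i"])
  finally show ?case by simp
qed auto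

lemma rstepI:
  "(l, r) \<in> E \<Longrightarrow> is_pos s p \<Longrightarrow> subt_at s p = l \<cdot> \<sigma> \<Longrightarrow> (s, replace_at s p (r \<cdot> \<sigma>)) \<in> rstep E"
  unfolding rstep_def rstep_at_def by blast

lemma rstepE:
  assumes "(s, t) \<in> rstep E"
  obtains l r \<sigma> p where "(l, r) \<in> E" "is_pos s p" "subt_at s p = l \<cdot> \<sigma>" "t = replace_at s p (r \<cdot> \<sigma>)"
  using assms unfolding rstep_def rstep_at_def by blast

lemma rstep_root: "(l, r) \<in> E \<Longrightarrow> (l \<cdot> \<sigma>, r \<cdot> \<sigma>) \<in> rstep E"
  using rstepI[of l r E "l \<cdot> \<sigma>" "[]" \<sigma>] by simp

lemma rstep_variant:
  assumes "\<rho> \<in> E" "variant \<rho> (l, r)"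
  shows "(l \<cdot> \<sigma>, r \<cdot> \<sigma>) \<in> rstep E"
proof -
  from assms(2) obtain \<pi> where "l = fst \<rho> \<cdot> (Var \<circ> \<pi>)" "r = snd \<rho> \<cdot> (Var \<circ> \<pi>)"
    by (auto simp: variant_def)
  with rstep_root[of "fst \<rho>" "snd \<rho>" E "\<lambda>x. Var (\<pi> x) \<cdot> \<sigma>"] assms(1) show ?thesis
    by (simp add: subst_subst)
qed

lemma rstep_ctxt:
  assumes "(a, b) \<in> rstep E" "is_pos s p"
  shows "(replace_at s p a, replace_at s p b) \<in> rstep E"
  using assms(1)
proof (cases rule: rstepE)
  case (1 l r \<sigma> q)
  then show ?thesis
    using rstepI[of l r E "replace_at s p a" "p @ q" \<sigma>] assms(2)
    by (simp add: is_pos_append subt_at_append replace_at_append is_pos_replace_at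
        subt_at_replace_at replace_at_replace_at)
qed

lemma rsteps_ctxt:
  "(a, b) \<in> (rstep E)\<^sup>* \<Longrightarrow> is_pos s p \<Longrightarrow> (replace_at s p a, replace_at s p b) \<in> (rstep E)\<^sup>*"
  by (induction rule: rtrancl_induct) (auto intro: rtrancl_into_rtrancl rstep_ctxt)

lemma rstep_subst:
  assumes "(a, b) \<in> rstep E"
  shows "(a \<cdot> \<gamma>, b \<cdot> \<gamma>) \<in> rstep E"
  using assms
proof (cases rule: rstepE)
  case (1 l r \<sigma> p)
  then show ?thesis
    using rstepI[of l r E "a \<cdot> \<gamma>" p "\<lambda>x. \<sigma> x \<cdot> \<gamma>"]
    by (simp add: is_pos_subst subt_at_subst replace_at_subst subst_subst)
qed

lemma rstep_mono: "E \<subseteq> E' \<Longrightarrow> rstep E \<subseteq> rstep E'"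
  unfolding rstep_def rstep_at_def by blast

lemma rstep_converse: "rstep (E\<inverse>) = (rstep E)\<inverse>"
proof -
  have "(b, a) \<in> rstep E" if "(a, b) \<in> rstep (E\<inverse>)" for a b E
    using that
  proof (cases rule: rstepE)
    case (1 r l \<sigma> p)
    then show ?thesis
      using rstepI[of l r E b p \<sigma>] replace_at_subt_at[of a p]
      by (simp add: is_pos_replace_at subt_at_replace_at replace_at_replace_at)
  qed
  from this[of _ _ E] this[of _ _ "E\<inverse>"] show ?thesis by auto
qed

lemma rstep_Bpm_simB: "rstep (Bpm B) \<subseteq> simB B"
proof -
  have "rstep (Bpm B) = rstep B \<union> rstep (B\<inverse>)"
    unfolding Bpm_def rstep_def rstep_at_def by blast
  then show ?thesis
    unfolding simB_def conv_step_def rstep_converse by blast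
qed

lemma rsteps_Fun_args:
  "list_all2 (\<lambda>a b. (a, b) \<in> (rstep E)\<^sup>*) ss ts \<Longrightarrow>
   (Fun f (us @ ss), Fun f (us @ ts)) \<in> (rstep E)\<^sup>*"
proof (induction ss ts arbitrary: us rule: list_all2_induct)
  case (Cons s ss t ts)
  have "(Fun f (us @ s # ss), Fun f (us @ t # ss)) \<in> (rstep E)\<^sup>*"
    using rsteps_ctxt[OF Cons(1), of "Fun f (us @ s # ss)" "[length us]"]
    by (simp add: list_update_append)
  with Cons(3)[of "us @ [t]"] show ?case by simp
qed simp

lemma rsteps_subst_cong:
  "(\<And>x. (\<sigma> x, \<tau> x) \<in> (rstep E)\<^sup>*) \<Longrightarrow> (t \<cdot> \<sigma>, t \<cdot> \<tau>) \<in> (rstep E)\<^sup>*"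
proof (induction t)
  case (Fun f ts)
  then have "list_all2 (\<lambda>a b. (a, b) \<in> (rstep E)\<^sup>*) (map (\<lambda>t. t \<cdot> \<sigma>) ts) (map (\<lambda>t. t \<cdot> \<tau>) ts)"
    by (auto simp: list_all2_conv_all_nth)
  from rsteps_Fun_args[OF this, of f "[]"] show ?case by simp
qed simp

lemma rsteps_replace_at_Var:
  assumes "is_pos l q" "subt_at l q = Var x" "(\<sigma> x, a) \<in> (rstep E)\<^sup>*"
  shows "(replace_at (l \<cdot> \<sigma>) q a, l \<cdot> \<sigma>(x := a)) \<in> (rstep E)\<^sup>*"
  using assms(1,2)
proof (induction l arbitrary: q)
  case (Var y)
  then show ?case by (cases q) auto
next
  case (Fun f ls)
  then obtain i q' where q: "q = i # q'" and i: "i < length ls"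
    and q': "is_pos (ls ! i) q'" "subt_at (ls ! i) q' = Var x"
    by (cases q) auto
  have "(t \<cdot> \<sigma>, t \<cdot> \<sigma>(x := a)) \<in> (rstep E)\<^sup>*" for t
    by (rule rsteps_subst_cong) (use assms(3) in auto)
  with Fun.IH[OF nth_mem[OF i] q'] i
  have "list_all2 (\<lambda>a b. (a, b) \<in> (rstep E)\<^sup>*)
      ((map (\<lambda>t. t \<cdot> \<sigma>) ls)[i := replace_at (ls ! i \<cdot> \<sigma>) q' a]) (map (\<lambda>t. t \<cdot> \<sigma>(x := a)) ls)"
    by (auto simp: list_all2_conv_all_nth nth_list_update fun_upd_def)
  from rsteps_Fun_args[OF this, of f "[]"] show ?case
    using q i by (simp add: fun_upd_def)
qed

section \<open>Existence of most general unifiers\<close>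

type_synonym ('f, 'v) eqs = "(('f, 'v) trm \<times> ('f, 'v) trm) list"

definition unifies_list :: "('f, 'v) subst \<Rightarrow> ('f, 'v) eqs \<Rightarrow> bool" where
  "unifies_list \<sigma> E \<longleftrightarrow> (\<forall>(a, b) \<in> set E. a \<cdot> \<sigma> = b \<cdot> \<sigma>)"

definition is_mgu_list :: "('f, 'v) subst \<Rightarrow> ('f, 'v) eqs \<Rightarrow> bool" where
  "is_mgu_list \<sigma> E \<longleftrightarrow>
    unifies_list \<sigma> E \<and> (\<forall>\<tau>. unifies_list \<tau> E \<longrightarrow> (\<exists>\<gamma>. \<forall>x. \<tau> x = \<sigma> x \<cdot> \<gamma>))"

definition vars_eqs :: "('f, 'v) eqs \<Rightarrow> 'v set" where
  "vars_eqs E = (\<Union>(a, b) \<in> set E. vars a \<union> vars b)"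

definition size_eqs :: "('f, 'v) eqs \<Rightarrow> nat" where
  "size_eqs E = sum_list (map (\<lambda>(a, b). size a + size b) E)"

lemma finite_vars_eqs [simp]: "finite (vars_eqs E)"
  by (auto simp: vars_eqs_def)

lemma is_mgu_list_Nil: "is_mgu_list Var []"
  by (auto simp: is_mgu_list_def unifies_list_def)

lemma unifies_list_Cons_swap: "unifies_list \<sigma> ((b, a) # E) \<longleftrightarrow> unifies_list \<sigma> ((a, b) # E)"
  by (auto simp: unifies_list_def)

lemma unifies_list_Cons_refl: "unifies_list \<sigma> ((a, a) # E) \<longleftrightarrow> unifies_list \<sigma> E"
  by (simp add: unifies_list_def)

lemma unifies_list_decompose:
  "length as = length bs \<Longrightarrow>
   unifies_list \<sigma> ((Fun f as, Fun f bs) # E) \<longleftrightarrow> unifies_list \<sigma> (zip as bs @ E)"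
  by (auto simp: unifies_list_def list_eq_iff_zip_eq zip_map_map)

lemma size_eqs_decompose:
  "length as = length bs \<Longrightarrow> size_eqs (zip as bs @ E) < size_eqs ((Fun f as, Fun g bs) # E)"
proof -
  have "length as = length bs \<Longrightarrow>
      size_eqs (zip as bs) \<le> size_list size as + size_list size bs"
    by (induction as bs rule: list_induct2) (auto simp: size_eqs_def)
  then show "length as = length bs \<Longrightarrow> ?thesis"
    by (simp add: size_eqs_def)
qed

lemma unifies_occurs_check:
  assumes "x \<in> vars c" "c \<noteq> Var x"
  shows "Var x \<cdot> \<tau> \<noteq> c \<cdot> \<tau>"
proof -
  obtain f ts where c: "c = Fun f ts"
    using assms by (cases c) auto
  with assms(1) obtain t where "t \<in> set ts" "x \<in> vars t" by auto
  then have "size (\<tau> x) < size (c \<cdot> \<tau>)"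
    using size_subst_Var_le[of x t \<tau>] c
    by (auto intro!: le_imp_less_Suc size_list_estimation'[where x = t])
  then show ?thesis by auto
qed

lemma subst_Var_upd_absorb: "\<tau> x = c \<cdot> \<tau> \<Longrightarrow> t \<cdot> Var(x := c) \<cdot> \<tau> = t \<cdot> \<tau>"
  unfolding subst_subst by (rule subst_cong) auto

lemma is_mgu_list_elim:
  assumes "x \<notin> vars c"
    and mgu: "is_mgu_list \<theta> (map (\<lambda>(a, b). (a \<cdot> Var(x := c), b \<cdot> Var(x := c))) E)"
  shows "is_mgu_list (\<lambda>y. (Var(x := c)) y \<cdot> \<theta>) ((Var x, c) # E)"
proof -
  define \<epsilon> where "\<epsilon> = Var(x := c)"
  have compose: "t \<cdot> (\<lambda>y. \<epsilon> y \<cdot> \<theta>) = t \<cdot> \<epsilon> \<cdot> \<theta>" for t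
    by (simp add: subst_subst)
  have "c \<cdot> \<epsilon> = c \<cdot> Var"
    by (rule subst_cong) (use assms(1) in \<open>auto simp: \<epsilon>_def\<close>)
  then have "Var x \<cdot> \<epsilon> = c \<cdot> \<epsilon>"
    by (simp add: \<epsilon>_def)
  moreover have "unifies_list \<theta> (map (\<lambda>(a, b). (a \<cdot> \<epsilon>, b \<cdot> \<epsilon>)) E)"
    using mgu by (simp add: is_mgu_list_def \<epsilon>_def)
  ultimately have "unifies_list (\<lambda>y. \<epsilon> y \<cdot> \<theta>) ((Var x, c) # E)"
    unfolding unifies_list_def compose by auto
  moreover have "\<exists>\<gamma>. \<forall>y. \<tau> y = \<epsilon> y \<cdot> \<theta> \<cdot> \<gamma>" if "unifies_list \<tau> ((Var x, c) # E)" for \<tau>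
  proof -
    from that have "\<tau> x = c \<cdot> \<tau>"
      by (simp add: unifies_list_def)
    then have absorb: "t \<cdot> \<epsilon> \<cdot> \<tau> = t \<cdot> \<tau>" for t
      unfolding \<epsilon>_def by (rule subst_Var_upd_absorb)
    with that have "unifies_list \<tau> (map (\<lambda>(a, b). (a \<cdot> Var(x := c), b \<cdot> Var(x := c))) E)"
      by (auto simp: unifies_list_def \<epsilon>_def)
    with mgu obtain \<gamma> where \<gamma>: "\<And>y. \<tau> y = \<theta> y \<cdot> \<gamma>"
      by (auto simp: is_mgu_list_def)
    have "\<epsilon> y \<cdot> \<theta> \<cdot> \<gamma> = Var y \<cdot> \<epsilon> \<cdot> \<tau>" for y
      by (simp add: subst_subst \<gamma>[symmetric])
    then have "\<tau> y = \<epsilon> y \<cdot> \<theta> \<cdot> \<gamma>" for y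
      using absorb[of "Var y"] by simp
    then show ?thesis by blast
  qed
  ultimately show ?thesis
    by (simp add: is_mgu_list_def \<epsilon>_def[symmetric])
qed

lemma vars_eqs_elim:
  assumes "x \<notin> vars c"
  shows "vars_eqs (map (\<lambda>(a, b). (a \<cdot> Var(x := c), b \<cdot> Var(x := c))) E)
    \<subset> vars_eqs ((Var x, c) # E)"
  using assms by (fastforce simp: vars_eqs_def vars_subst split: if_splits)

lemma mgu_list_exists: "unifies_list \<tau> E \<Longrightarrow> \<exists>\<sigma>. is_mgu_list \<sigma> E"
proof (induction E arbitrary: \<tau> rule: wf_induct_rule[OF wf_measures[of "[card \<circ> vars_eqs, size_eqs]"]])
  case (1 E)
  show ?case
  proof (cases E)
    case Nil
    then show ?thesis using is_mgu_list_Nil by blast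
  next
    case (Cons e E')
    then obtain a b where E: "E = (a, b) # E'"
      by (cases e) auto
    have var_case: "\<exists>\<sigma>. is_mgu_list \<sigma> ((Var x, c) # E')"
      if "unifies_list \<tau> ((Var x, c) # E')" "c \<noteq> Var x"
        and vars: "vars_eqs ((Var x, c) # E') = vars_eqs E" for x c
    proof -
      have \<tau>x: "\<tau> x = c \<cdot> \<tau>"
        using that(1) by (simp add: unifies_list_def)
      then have x: "x \<notin> vars c"
        using unifies_occurs_check[of x c \<tau>] that(2) by auto
      let ?E = "map (\<lambda>(a, b). (a \<cdot> Var(x := c), b \<cdot> Var(x := c))) E'"
      have "unifies_list \<tau> ?E"
        using that(1) by (auto simp: unifies_list_def subst_Var_upd_absorb[OF \<tau>x])
      moreover have "card (vars_eqs ?E) < card (vars_eqs E)"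
        using vars_eqs_elim[OF x, of E'] vars by (simp add: psubset_card_mono)
      ultimately obtain \<theta> where "is_mgu_list \<theta> ?E"
        using "1.IH"[of ?E \<tau>] by auto
      then show ?thesis
        using is_mgu_list_elim[OF x] by blast
    qed
    have sub: "card (vars_eqs E'') \<le> card (vars_eqs E)" if "vars_eqs E'' \<subseteq> vars_eqs E" for E''
      using that by (simp add: card_mono)
    consider (trivial) "a = b" | (var_left) x where "a = Var x" "b \<noteq> Var x"
      | (var_right) x f as where "b = Var x" "a = Fun f as"
      | (decompose) f as g bs where "a = Fun f as" "b = Fun g bs"
      by (metis trm.exhaust)
    then show ?thesis
    proof cases
      case trivial
      have "size_eqs E' < size_eqs E" "vars_eqs E' \<subseteq> vars_eqs E"
        using E by (cases a; auto simp: size_eqs_def vars_eqs_def)+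
      then obtain \<sigma> where "is_mgu_list \<sigma> E'"
        using sub[of E'] "1.prems" "1.IH"[of E' \<tau>] by (force simp: E trivial unifies_list_Cons_refl)
      then have "is_mgu_list \<sigma> E"
        by (simp add: E trivial is_mgu_list_def unifies_list_Cons_refl)
      then show ?thesis by blast
    next
      case var_left
      with var_case[of x b] "1.prems" show ?thesis
        by (simp add: E)
    next
      case var_right
      have "vars_eqs ((Var x, a) # E') = vars_eqs E"
        by (auto simp: E var_right vars_eqs_def)
      with var_case[of x a] "1.prems" var_right obtain \<sigma> where "is_mgu_list \<sigma> ((Var x, a) # E')"
        by (auto simp: E unifies_list_Cons_swap)
      then have "is_mgu_list \<sigma> E"
        by (simp add: E var_right is_mgu_list_def unifies_list_Cons_swap)
      then show ?thesis by blast
    next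
      case decompose
      with "1.prems" have fg: "f = g" "length as = length bs"
        by (auto simp: E unifies_list_def dest: map_eq_imp_length_eq)
      let ?E = "zip as bs @ E'"
      have "vars_eqs ?E \<subseteq> vars_eqs E"
        using decompose by (auto simp: E vars_eqs_def dest: set_zip_leftD set_zip_rightD)
      then obtain \<sigma> where "is_mgu_list \<sigma> ?E"
        using sub[of ?E] size_eqs_decompose[OF fg(2)] "1.IH"[of ?E \<tau>] "1.prems" fg decompose
        by (force simp: E unifies_list_decompose)
      then have "is_mgu_list \<sigma> E"
        using fg decompose by (simp add: E is_mgu_list_def unifies_list_decompose)
      then show ?thesis by blast
    qed
  qed
qed

lemma mgu_exists: "unifies \<tau> s t \<Longrightarrow> \<exists>\<sigma>. is_mgu \<sigma> s t"
  using mgu_list_exists[of \<tau> "[(s, t)]"]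
  by (auto simp: is_mgu_list_def is_mgu_def unifies_list_def unifies_def)

lemma bij_rename_apart:
  fixes A V :: "'v :: infinite set"
  assumes "finite A" "finite V"
  obtains \<pi> where "bij \<pi>" "\<pi> ` A \<inter> V = {}"
proof -
  from assms(1) have "\<exists>\<pi>. bij \<pi> \<and> \<pi> ` A \<inter> V = {}"
  proof (induction rule: finite_induct)
    case empty
    show ?case using bij_id by blast
  next
    case (insert a A)
    then obtain \<pi> where \<pi>: "bij \<pi>" "\<pi> ` A \<inter> V = {}" by blast
    have "finite (V \<union> \<pi> ` A \<union> {\<pi> a})"
      using assms(2) insert(1) by simp
    then obtain z where z: "z \<notin> V \<union> \<pi> ` A \<union> {\<pi> a}"
      by (meson ex_new_if_finite infinite_UNIV)
    let ?\<pi> = "transpose (\<pi> a) z \<circ> \<pi>"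
    have "?\<pi> b = \<pi> b" if "b \<in> A" for b
    proof -
      have "\<pi> b \<noteq> \<pi> a"
        using that insert(2) bij_is_inj[OF \<pi>(1)] by (metis injD)
      moreover have "\<pi> b \<noteq> z"
        using that z by blast
      ultimately show ?thesis by simp
    qed
    then have "?\<pi> ` insert a A \<inter> V = {}"
      using \<pi>(2) z by auto
    moreover have "bij ?\<pi>"
      using \<pi>(1) by (simp add: bij_comp)
    ultimately show ?case by blast
  qed
  with that show ?thesis by blast
qed

lemma rule_variant_fresh:
  fixes l r :: "('f, 'v :: infinite) trm"
  assumes "finite V"
  obtains l' r' \<tau> where "variant (l, r) (l', r')" "rule_vars (l', r') \<inter> V = {}"
    "l' \<cdot> \<tau> = l \<cdot> \<sigma>" "r' \<cdot> \<tau> = r \<cdot> \<sigma>"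
proof -
  have "finite (rule_vars (l, r))"
    by (simp add: rule_vars_def)
  then obtain \<pi> where \<pi>: "bij \<pi>" "\<pi> ` rule_vars (l, r) \<inter> V = {}"
    using bij_rename_apart[OF _ assms] by blast
  have "rule_vars (l \<cdot> (Var \<circ> \<pi>), r \<cdot> (Var \<circ> \<pi>)) = \<pi> ` rule_vars (l, r)"
    by (auto simp: rule_vars_def vars_subst)
  moreover have "t \<cdot> (Var \<circ> \<pi>) \<cdot> (\<sigma> \<circ> inv \<pi>) = t \<cdot> \<sigma>" for t
    using bij_is_inj[OF \<pi>(1)] by (simp add: subst_subst)
  ultimately show ?thesis
    using that[of "l \<cdot> (Var \<circ> \<pi>)" "r \<cdot> (Var \<circ> \<pi>)" "\<sigma> \<circ> inv \<pi>"] \<pi>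
    by (auto simp: variant_def)
qed

section \<open>Prime critical pairs and innermost redexes\<close>

definition proper_subterms_NF :: "('f, 'v) trm rel \<Rightarrow> ('f, 'v) trm \<Rightarrow> bool" where
  "proper_subterms_NF R t \<longleftrightarrow> (\<forall>q. q \<noteq> [] \<and> is_pos t q \<longrightarrow> NF R (subt_at t q))"

definition prime_pairs :: "('f, 'v) trm rel \<Rightarrow> ('f, 'v) trm rel \<Rightarrow> ('f, 'v) trm rel \<Rightarrow> ('f, 'v) trm rel" where
  "prime_pairs R E1 E2 = {(t, u). \<exists>p s. prime_peak R E1 E2 t p s u}"

lemma prime_peak_iff:
  "prime_peak R E1 E2 t p s u \<longleftrightarrow> crit_peak E1 E2 t p s u \<and> proper_subterms_NF R (subt_at s p)"
  by (simp add: prime_peak_def proper_subterms_NF_def)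

lemma NF_instance: "NF R (t \<cdot> \<sigma>) \<Longrightarrow> NF R t"
  unfolding NF_def using rstep_subst by blast

lemma proper_subterms_NF_instance: "proper_subterms_NF R (t \<cdot> \<sigma>) \<Longrightarrow> proper_subterms_NF R t"
  unfolding proper_subterms_NF_def by (metis NF_instance is_pos_subst subt_at_subst)

lemma innermost_redex:
  "\<not> NF R a \<Longrightarrow> \<exists>q l r \<sigma>. is_pos a q \<and> (l, r) \<in> R \<and> subt_at a q = l \<cdot> \<sigma> \<and> proper_subterms_NF R (l \<cdot> \<sigma>)"
proof (induction a rule: measure_induct_rule[of size])
  case (less a)
  then obtain l r \<sigma> q where lr: "(l, r) \<in> R" "is_pos a q" "subt_at a q = l \<cdot> \<sigma>"
    unfolding NF_def by (metis rstepE)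
  show ?case
  proof (cases "proper_subterms_NF R (l \<cdot> \<sigma>)")
    case True
    with lr show ?thesis by blast
  next
    case False
    then obtain q' where q': "q' \<noteq> []" "is_pos (l \<cdot> \<sigma>) q'" "\<not> NF R (subt_at (l \<cdot> \<sigma>) q')"
      unfolding proper_subterms_NF_def by blast
    have "size (subt_at (l \<cdot> \<sigma>) q') < size (l \<cdot> \<sigma>)"
      using size_subt_at_less[OF q'(2,1)] .
    also have "size (l \<cdot> \<sigma>) \<le> size a"
      using lr(2,3) size_subt_at_less[of a q] by (cases "q = []") auto
    finally obtain q'' l' r' \<sigma>' where "is_pos (subt_at (l \<cdot> \<sigma>) q') q''" "(l', r') \<in> R"
      "subt_at (subt_at (l \<cdot> \<sigma>) q') q'' = l' \<cdot> \<sigma>'" "proper_subterms_NF R (l' \<cdot> \<sigma>')"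
      using less.IH q'(3) by blast
    with lr q' show ?thesis
      by (intro exI[of _ "q @ q' @ q''"]) (auto simp: is_pos_append subt_at_append)
  qed
qed

lemma innermost_proper_redex:
  assumes "\<not> proper_subterms_NF R t"
  obtains q l r \<sigma> where "q \<noteq> []" "is_pos t q" "(l, r) \<in> R" "subt_at t q = l \<cdot> \<sigma>"
    "proper_subterms_NF R (l \<cdot> \<sigma>)"
proof -
  from assms obtain q where q: "q \<noteq> []" "is_pos t q" "\<not> NF R (subt_at t q)"
    unfolding proper_subterms_NF_def by blast
  moreover obtain q' l r \<sigma> where "is_pos (subt_at t q) q'" "(l, r) \<in> R"
    "subt_at (subt_at t q) q' = l \<cdot> \<sigma>" "proper_subterms_NF R (l \<cdot> \<sigma>)"
    using innermost_redex[OF q(3)] by blast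
  ultimately show ?thesis
    using that[of "q @ q'" l r \<sigma>] by (simp add: is_pos_append subt_at_append)
qed

section \<open>Peaks with an innermost inner redex\<close>

lemma prime_pair_instance:
  fixes R E :: "('f, 'v :: infinite) trm rel"
  assumes lr: "\<exists>\<rho> \<in> E. variant \<rho> (l, r)"
    and q: "is_pos l q" "q \<noteq> []" "subt_at l q = Fun f ts"
    and redex: "(l', r') \<in> R" "subt_at (l \<cdot> \<sigma>) q = l' \<cdot> \<sigma>'" "proper_subterms_NF R (l' \<cdot> \<sigma>')"
  shows "(replace_at (l \<cdot> \<sigma>) q (r' \<cdot> \<sigma>'), r \<cdot> \<sigma>) \<in> rstep (prime_pairs R R E)"
proof -
  have "finite (rule_vars (l, r))"
    by (simp add: rule_vars_def)
  then obtain l'' r'' \<tau> where fresh: "variant (l', r') (l'', r'')" "rule_vars (l'', r'') \<inter> rule_vars (l, r) = {}"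
    "l'' \<cdot> \<tau> = l' \<cdot> \<sigma>'" "r'' \<cdot> \<tau> = r' \<cdot> \<sigma>'"
    using rule_variant_fresh by metis
  \<comment> \<open>a single unifier for both rules, available because they were renamed apart\<close>
  define \<theta> where "\<theta> x = (if x \<in> rule_vars (l'', r'') then \<tau> x else \<sigma> x)" for x
  have \<theta>: "l'' \<cdot> \<theta> = l' \<cdot> \<sigma>'" "r'' \<cdot> \<theta> = r' \<cdot> \<sigma>'" "l \<cdot> \<theta> = l \<cdot> \<sigma>" "r \<cdot> \<theta> = r \<cdot> \<sigma>"
    "subt_at l q \<cdot> \<theta> = subt_at l q \<cdot> \<sigma>"
  proof -
    have "t \<cdot> \<theta> = t \<cdot> \<tau>" if "vars t \<subseteq> rule_vars (l'', r'')" for t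
      by (rule subst_cong) (use that in \<open>auto simp: \<theta>_def\<close>)
    moreover have "t \<cdot> \<theta> = t \<cdot> \<sigma>" if "vars t \<subseteq> rule_vars (l, r)" for t
      by (rule subst_cong) (use that fresh(2) in \<open>auto simp: \<theta>_def\<close>)
    ultimately show "l'' \<cdot> \<theta> = l' \<cdot> \<sigma>'" "r'' \<cdot> \<theta> = r' \<cdot> \<sigma>'" "l \<cdot> \<theta> = l \<cdot> \<sigma>" "r \<cdot> \<theta> = r \<cdot> \<sigma>"
      "subt_at l q \<cdot> \<theta> = subt_at l q \<cdot> \<sigma>"
      using fresh(3,4) vars_subt_at[OF q(1)] by (auto simp: rule_vars_def)
  qed
  then have unif: "unifies \<theta> l'' (subt_at l q)"
    using redex(2) subt_at_subst[OF q(1)] by (simp add: unifies_def)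
  then obtain \<mu> where \<mu>: "is_mgu \<mu> l'' (subt_at l q)"
    using mgu_exists by blast
  with unif obtain \<gamma> where "\<And>x. \<mu> x \<cdot> \<gamma> = \<theta> x"
    by (metis is_mgu_def)
  then have \<gamma>: "t \<cdot> \<mu> \<cdot> \<gamma> = t \<cdot> \<theta>" for t
    by (simp add: subst_subst)
  let ?t = "replace_at (l \<cdot> \<mu>) q (r'' \<cdot> \<mu>)"
  have "overlap R E (l'', r'') q (l, r)"
    using fresh(1,2) redex(1) lr q unif by (auto simp: overlap_def)
  then have "crit_peak R E ?t q (l \<cdot> \<mu>) (r \<cdot> \<mu>)"
    using \<mu> unfolding crit_peak_def by blast
  moreover have "subt_at (l \<cdot> \<mu>) q = l'' \<cdot> \<mu>"
    using \<mu> subt_at_subst[OF q(1)] by (simp add: is_mgu_def unifies_def)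
  moreover have "proper_subterms_NF R (l'' \<cdot> \<mu>)"
    using redex(3) proper_subterms_NF_instance[of R "l'' \<cdot> \<mu>" \<gamma>] by (simp add: \<gamma> \<theta>)
  ultimately have "(?t, r \<cdot> \<mu>) \<in> prime_pairs R R E"
    by (auto simp: prime_pairs_def prime_peak_iff intro!: exI[of _ q] exI[of _ "l \<cdot> \<mu>"])
  from rstep_root[OF this, of \<gamma>] show ?thesis
    by (simp add: replace_at_subst is_pos_subst[OF q(1)] \<gamma> \<theta>)
qed

text \<open>How the two reducts of a peak whose inner redex is innermost are related.\<close>

definition peak_join :: "('f, 'v) trm rel \<Rightarrow> ('f, 'v) trm rel \<Rightarrow> ('f, 'v) trm rel" where
  "peak_join R E = (rstep R)\<^sup>* O rstep E O ((rstep R)\<^sup>*)\<inverse> \<union> rstep (prime_pairs R R E)"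

lemma peak_join_ctxt:
  assumes "(a, b) \<in> peak_join R E" "is_pos s p"
  shows "(replace_at s p a, replace_at s p b) \<in> peak_join R E"
  using assms rstep_ctxt[OF _ assms(2)] rsteps_ctxt[OF _ assms(2)]
  unfolding peak_join_def by blast

lemma nested_peak_in_peak_join:
  fixes R E :: "('f, 'v :: infinite) trm rel"
  assumes lr: "\<exists>\<rho> \<in> E. variant \<rho> (l, r)"
    and q: "is_pos (l \<cdot> \<sigma>) q" "q \<noteq> []"
    and redex: "(l', r') \<in> R" "subt_at (l \<cdot> \<sigma>) q = l' \<cdot> \<sigma>'" "proper_subterms_NF R (l' \<cdot> \<sigma>')"
  shows "(replace_at (l \<cdot> \<sigma>) q (r' \<cdot> \<sigma>'), r \<cdot> \<sigma>) \<in> peak_join R E"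
  using q(1)
proof (cases rule: is_pos_subst_cases)
  case (1 f ts)
  then show ?thesis
    using prime_pair_instance[OF lr 1(1) q(2) 1(2) redex] by (simp add: peak_join_def)
next
  case (2 q1 q2 x)
  let ?a = "replace_at (\<sigma> x) q2 (r' \<cdot> \<sigma>')"
  have "subt_at (\<sigma> x) q2 = l' \<cdot> \<sigma>'" and q1: "is_pos (l \<cdot> \<sigma>) q1" "subt_at (l \<cdot> \<sigma>) q1 = \<sigma> x"
    using redex(2) 2 is_pos_subst[OF 2(2)] by (simp_all add: subt_at_append subt_at_subst)
  then have step: "(\<sigma> x, ?a) \<in> rstep R"
    using rstepI[OF redex(1) 2(4)] by simp
  have "(replace_at (l \<cdot> \<sigma>) q (r' \<cdot> \<sigma>'), l \<cdot> \<sigma>(x := ?a)) \<in> (rstep R)\<^sup>*"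
    using rsteps_replace_at_Var[where \<sigma> = \<sigma>, OF 2(2,3) r_into_rtrancl[OF step]]
    by (simp add: 2(1) replace_at_append q1)
  moreover have "(r \<cdot> \<sigma>, r \<cdot> \<sigma>(x := ?a)) \<in> (rstep R)\<^sup>*"
    by (rule rsteps_subst_cong) (use step in auto)
  moreover have "(l \<cdot> \<sigma>(x := ?a), r \<cdot> \<sigma>(x := ?a)) \<in> rstep E"
    using lr rstep_variant by blast
  ultimately show ?thesis
    unfolding peak_join_def by blast
qed

lemma crit_peakE:
  assumes "crit_peak E1 E2 t p s u"
  obtains l1 r1 l2 r2 \<sigma> where "\<exists>\<rho> \<in> E1. variant \<rho> (l1, r1)" "\<exists>\<rho> \<in> E2. variant \<rho> (l2, r2)"
    "s = l2 \<cdot> \<sigma>" "is_pos s p" "subt_at s p = l1 \<cdot> \<sigma>" "t = replace_at s p (r1 \<cdot> \<sigma>)" "u = r2 \<cdot> \<sigma>"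
  using assms is_pos_subst subt_at_subst
  by (fastforce simp: crit_peak_def overlap_def is_mgu_def unifies_def)

lemma crit_peak_rstep:
  assumes "crit_peak E1 E2 t p s u"
  shows "(s, t) \<in> rstep E1" "(s, u) \<in> rstep E2"
proof -
  obtain l1 r1 l2 r2 \<sigma> where peak: "\<exists>\<rho> \<in> E1. variant \<rho> (l1, r1)" "\<exists>\<rho> \<in> E2. variant \<rho> (l2, r2)"
    "s = l2 \<cdot> \<sigma>" "is_pos s p" "subt_at s p = l1 \<cdot> \<sigma>" "t = replace_at s p (r1 \<cdot> \<sigma>)" "u = r2 \<cdot> \<sigma>"
    using crit_peakE[OF assms] by blast
  then have "(l1 \<cdot> \<sigma>, r1 \<cdot> \<sigma>) \<in> rstep E1" "(l2 \<cdot> \<sigma>, r2 \<cdot> \<sigma>) \<in> rstep E2"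
    using rstep_variant by blast+
  with peak show "(s, t) \<in> rstep E1" "(s, u) \<in> rstep E2"
    using rstep_ctxt[of "l1 \<cdot> \<sigma>" "r1 \<cdot> \<sigma>" E1 s p] replace_at_subt_at[of s p] by simp_all
qed

lemma crit_peak_prime_or_nested:
  fixes R E1 E2 :: "('f, 'v :: infinite) trm rel"
  assumes "crit_peak E1 E2 t p s u"
  obtains "(t, u) \<in> prime_pairs R E1 E2"
  | v where "(s, v) \<in> rstep R" "(v, t) \<in> peak_join R E1" "(v, u) \<in> peak_join R E2"
proof (cases "proper_subterms_NF R (subt_at s p)")
  case True
  with assms that(1) show ?thesis
    by (auto simp: prime_pairs_def prime_peak_iff)
next
  case False
  obtain l1 r1 l2 r2 \<sigma> where peak: "\<exists>\<rho> \<in> E1. variant \<rho> (l1, r1)" "\<exists>\<rho> \<in> E2. variant \<rho> (l2, r2)"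
    "s = l2 \<cdot> \<sigma>" "is_pos s p" "subt_at s p = l1 \<cdot> \<sigma>" "t = replace_at s p (r1 \<cdot> \<sigma>)" "u = r2 \<cdot> \<sigma>"
    using crit_peakE[OF assms] by blast
  obtain q l r \<tau> where q: "q \<noteq> []" "is_pos (l1 \<cdot> \<sigma>) q" and redex: "(l, r) \<in> R"
    "subt_at (l1 \<cdot> \<sigma>) q = l \<cdot> \<tau>" "proper_subterms_NF R (l \<cdot> \<tau>)"
    using innermost_proper_redex[OF False] peak(5) by metis
  let ?v = "replace_at s (p @ q) (r \<cdot> \<tau>)"
  have pq: "is_pos (l2 \<cdot> \<sigma>) (p @ q)" "subt_at (l2 \<cdot> \<sigma>) (p @ q) = l \<cdot> \<tau>"
    using peak q redex by (simp_all add: is_pos_append subt_at_append)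
  then have "(s, ?v) \<in> rstep R"
    using rstepI[OF redex(1)] peak(3) by simp
  moreover have "(?v, t) \<in> peak_join R E1"
    using peak_join_ctxt[OF nested_peak_in_peak_join[OF peak(1) q(2,1) redex] peak(4)] peak
    by (simp add: replace_at_append)
  moreover have "(?v, u) \<in> peak_join R E2"
    using nested_peak_in_peak_join[OF peak(2) pq(1) _ redex(1) pq(2) redex(3)] q(1) peak(3,7)
    by simp
  ultimately show ?thesis
    using that(2) by blast
qed

lemma peak_join_R: "peak_join R R \<subseteq> join R \<union> conv_step (PCP R)"
  by (auto simp: peak_join_def join_def conv_step_def PCP_def prime_pairs_def
      intro: rtrancl_into_rtrancl)

lemma PCPpm_eq: "PCPpm R B = prime_pairs R R (Bpm B) \<union> prime_pairs R (Bpm B) R"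
  by (auto simp: PCPpm_def prime_pairs_def)

lemma peak_join_Bpm: "peak_join R (Bpm B) \<subseteq> join_sim R B \<union> conv_step (PCPpm R B)"
proof -
  have "rstep (prime_pairs R R (Bpm B)) \<subseteq> rstep (PCPpm R B)"
    by (rule rstep_mono) (simp add: PCPpm_eq)
  then show ?thesis
    using rstep_Bpm_simB unfolding peak_join_def join_sim_def conv_step_def by blast
qed

lemma pair_in_conv_step: "(t, u) \<in> E \<Longrightarrow> (t, u) \<in> conv_step E"
  using rstep_root[of t u E Var] by (simp add: conv_step_def)

lemma nabla_refl: "(s, t) \<in> rstep R \<Longrightarrow> nabla R t s t"
  by (auto simp: nabla_def join_def)

lemma nabla_peak_join:
  "(s, t) \<in> rstep R \<Longrightarrow> (s, v) \<in> rstep R \<Longrightarrow> (v, t) \<in> peak_join R R \<Longrightarrow>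
   nabla R t s v \<and> nabla R v s t"
  using peak_join_R unfolding nabla_def join_def conv_step_def by blast

lemma nabla_tilde_PCPpm:
  "(s, t) \<in> rstep R \<Longrightarrow> (s, u) \<in> simB B \<Longrightarrow> (t, u) \<in> PCPpm R B \<or> (u, t) \<in> PCPpm R B \<Longrightarrow>
   nabla_tilde R B t s u"
  using pair_in_conv_step[of _ _ "PCPpm R B"] by (auto simp: nabla_tilde_def conv_step_def)

lemma nabla_tilde_peak_join:
  "(s, v) \<in> rstep R \<Longrightarrow> (s, u) \<in> simB B \<Longrightarrow> (v, u) \<in> peak_join R (Bpm B) \<Longrightarrow>
   nabla_tilde R B v s u"
  using peak_join_Bpm unfolding nabla_tilde_def by blast

theorem lemma3p14:
  fixes R B :: "('f, 'v :: infinite) trm rel"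
  assumes "trs R" and "left_linear R"
    and "\<forall>(l, r) \<in> B. vars l = vars r"
  shows "(crit_peak R (Bpm B) t p s u \<longrightarrow> (\<exists>v. nabla R t s v \<and> nabla_tilde R B v s u)) \<and>
         (crit_peak (Bpm B) R t p s u \<longrightarrow> (\<exists>v. nabla_tilde R B v s t \<and> nabla R v s u))"
proof (intro conjI impI)
  assume peak: "crit_peak R (Bpm B) t p s u"
  then have st: "(s, t) \<in> rstep R" and su: "(s, u) \<in> simB B"
    using crit_peak_rstep rstep_Bpm_simB by blast+
  from peak show "\<exists>v. nabla R t s v \<and> nabla_tilde R B v s u"
  proof (cases rule: crit_peak_prime_or_nested[where R = R])
    case 1
    with st su show ?thesis
      by (intro exI[of _ t]) (simp add: nabla_refl nabla_tilde_PCPpm PCPpm_eq)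
  next
    case (2 v)
    with st su show ?thesis
      using nabla_peak_join nabla_tilde_peak_join by blast
  qed
next
  assume peak: "crit_peak (Bpm B) R t p s u"
  then have st: "(s, t) \<in> simB B" and su: "(s, u) \<in> rstep R"
    using crit_peak_rstep rstep_Bpm_simB by blast+
  from peak show "\<exists>v. nabla_tilde R B v s t \<and> nabla R v s u"
  proof (cases rule: crit_peak_prime_or_nested[where R = R])
    case 1
    with st su show ?thesis
      by (intro exI[of _ u]) (simp add: nabla_refl nabla_tilde_PCPpm PCPpm_eq)
  next
    case (2 v)
    with st su show ?thesis
      using nabla_peak_join nabla_tilde_peak_join by blast
  qed
qed

end
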